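(* The map $f$ is strictly increasing on $[a_0-1,a_0]$: if $x_1,x_2\in[a_0-1,a_0]$ and $x_1<x_2$, then $f(x_1)<f(x_2)$.
   Context: Let $Q=(q_k)_{k\ge1}$ be a sequence of integers with $q_k\ge 2$, and let $q\ge 2$ be an integer with $q_k\le q$ for all $k$. Put $a_0=\sum_{k\ge1}\frac{q_{2k}-1}{q_1q_2\cdots q_{2k}}$. Every $x\in[a_0-1,a_0]$ can be written as $x=\Delta^{-Q}_{\varepsilon_1\varepsilon_2\ldots}:=\sum_{k\ge1}\frac{(-1)^k\varepsilon_k}{q_1q_2\cdots q_k}$ with digits $\varepsilon_k\in\{0,1,\ldots,q_k-1\}$. Nega-$Q$-rational points have two representations, $\Delta^{-Q}_{\varepsilon_1\ldots\varepsilon_{m}[q_{m+1}-1]0[q_{m+3}-1]0\ldots}=\Delta^{-Q}_{\varepsilon_1\ldots\varepsilon_{m-1}[\varepsilon_m-1]0[q_{m+2}-1]0[q_{m+4}-1]0\ldots}$, and by convention only the first is used; other points have a unique representation. The map $f:[a_0-1,a_0]\to\mathbb R$ is $f\left(\Delta^{-Q}_{\varepsilon_1\varepsilon_2\ldots}\right)=\sum_{n\ge1}\frac{\varepsilon_n}{(-q)^n}$. *)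

theory Defs
  imports Complex_Main
begin

text \<open>The sequence Q = (q_k)_{k>=1} is a function Q :: nat => nat, with Q 0 unused.
  Digit sequences are functions eps :: nat => nat with digits eps k for k >= 1;
  we normalise eps 0 = 0 so that the representation is a unique object.\<close>

definition qprod :: "(nat \<Rightarrow> nat) \<Rightarrow> nat \<Rightarrow> real" where
  "qprod Q k = (\<Prod>i\<in>{1..k}. real (Q i))"

definition a0 :: "(nat \<Rightarrow> nat) \<Rightarrow> real" where
  "a0 Q = (\<Sum>k. (real (Q (2 * Suc k)) - 1) / qprod Q (2 * Suc k))"

definition nega_val :: "(nat \<Rightarrow> nat) \<Rightarrow> (nat \<Rightarrow> nat) \<Rightarrow> real" where
  "nega_val Q eps = (\<Sum>n. (-1) ^ Suc n * real (eps (Suc n)) / qprod Q (Suc n))"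

definition digit_seq :: "(nat \<Rightarrow> nat) \<Rightarrow> (nat \<Rightarrow> nat) \<Rightarrow> bool" where
  "digit_seq Q eps \<longleftrightarrow> eps 0 = 0 \<and> (\<forall>k\<ge>1. eps k < Q k)"

text \<open>Second (excluded) representation of a nega-Q-rational point:
  eps_1 ... eps_{m-1} [eps_m - 1] 0 [q_{m+2}-1] 0 [q_{m+4}-1] 0 ...,
  i.e. digit at position m is at most q_m - 2 and afterwards the digits are
  0 at positions m+1, m+3, ... and q_j - 1 at positions m+2, m+4, ...\<close>
definition second_rep :: "(nat \<Rightarrow> nat) \<Rightarrow> (nat \<Rightarrow> nat) \<Rightarrow> bool" where
  "second_rep Q eps \<longleftrightarrow> (\<exists>m\<ge>1. eps m < Q m - 1 \<and>
      (\<forall>j\<ge>1. eps (m + j) = (if odd j then 0 else Q (m + j) - 1)))"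

definition admissible :: "(nat \<Rightarrow> nat) \<Rightarrow> (nat \<Rightarrow> nat) \<Rightarrow> bool" where
  "admissible Q eps \<longleftrightarrow> digit_seq Q eps \<and> \<not> second_rep Q eps"

definition nega_rep :: "(nat \<Rightarrow> nat) \<Rightarrow> real \<Rightarrow> nat \<Rightarrow> nat" where
  "nega_rep Q x = (THE eps. admissible Q eps \<and> nega_val Q eps = x)"

definition fmap :: "(nat \<Rightarrow> nat) \<Rightarrow> nat \<Rightarrow> real \<Rightarrow> real" where
  "fmap Q q x = (\<Sum>n. real (nega_rep Q x (Suc n)) / (- real q) ^ Suc n)"

end

(*
  Compare two admissible digit sequences at their first difference, position m. Whatever the
  base sequence r_k >= q_k (>= 2), the alternating sum  sum_n (-1)^n e_n / (r_1 ... r_n)  changes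
  there by at least 1/(r_1 ... r_m) in the direction of (-1)^m, while the remaining digits, lying
  in [0, q_k - 1], can push back by at most  sum_{k>m} (r_k - 1)/(r_1 ... r_k) = 1/(r_1 ... r_m),
  with equality only along the excluded second representation. So the sum is strictly monotone in
  one fixed alternating lexicographic order, both for r = Q (the nega-Q value) and for the constant
  base r = q (the value of f). As nega-Q representations exist (greedy Cantor expansion of a_0 - x)
  and are unique, x_1 < x_2 forces that order on the digits, hence f x_1 < f x_2.
*)
theory Submission
  imports Defs
begin

lemma qprod_0 [simp]: "qprod Q 0 = 1"
  by (simp add: qprod_def)

lemma qprod_Suc: "qprod Q (Suc n) = qprod Q n * real (Q (Suc n))"
  by (simp add: qprod_def prod.nat_ivl_Suc' mult.commute)

lemma qprod_const: "qprod (\<lambda>_. q) n = real q ^ n"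
  by (simp add: qprod_def)

lemma qprod_ge_power:
  assumes "\<forall>k\<ge>1. 2 \<le> Q k"
  shows "2 ^ n \<le> qprod Q n"
proof (induction n)
  case (Suc n)
  have "(2::real) ^ Suc n = 2 ^ n * 2" by simp
  also have "\<dots> \<le> qprod Q n * real (Q (Suc n))"
    using Suc assms by (intro mult_mono) (auto intro: order_trans[OF zero_le_power, of 2])
  finally show ?case by (simp add: qprod_Suc)
qed simp

lemma qprod_pos:
  assumes "\<forall>k\<ge>1. 2 \<le> Q k"
  shows "0 < qprod Q n"
  using qprod_ge_power[OF assms, of n] by (smt (verit) zero_less_power)

lemma inverse_qprod_LIMSEQ:
  assumes "\<forall>k\<ge>1. 2 \<le> Q k"
  shows "(\<lambda>n. 1 / qprod Q n) \<longlonglongrightarrow> 0"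
proof (rule tendsto_sandwich[of "\<lambda>_. 0" _ _ "\<lambda>n. (1 / 2) ^ n"])
  show "\<forall>\<^sub>F n in sequentially. 0 \<le> 1 / qprod Q n"
    using qprod_pos[OF assms] by (auto intro: always_eventually less_imp_le)
  show "\<forall>\<^sub>F n in sequentially. 1 / qprod Q n \<le> (1 / 2) ^ n"
    using qprod_ge_power[OF assms] qprod_pos[OF assms]
    by (auto simp: power_one_over intro!: always_eventually divide_left_mono)
qed (auto intro: LIMSEQ_realpow_zero)

lemma qprod_tail_sums:
  assumes Q2: "\<forall>k\<ge>1. 2 \<le> Q k"
  shows "(\<lambda>j. (real (Q (j + Suc m)) - 1) / qprod Q (j + Suc m)) sums (1 / qprod Q m)"
proof -
  have "(\<lambda>j. 1 / qprod Q (j + m) - 1 / qprod Q (Suc j + m)) sums (1 / qprod Q (0 + m) - 0)"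
    by (rule telescope_sums'[OF LIMSEQ_ignore_initial_segment[OF inverse_qprod_LIMSEQ[OF Q2]]])
  moreover have "1 / qprod Q (j + m) - 1 / qprod Q (Suc j + m)
      = (real (Q (j + Suc m)) - 1) / qprod Q (j + Suc m)" for j
  proof -
    have "2 \<le> real (Q (Suc (j + m)))" using Q2 by simp
    then show ?thesis using qprod_pos[OF Q2, of "j + m"] by (simp add: qprod_Suc field_simps)
  qed
  ultimately show ?thesis by simp
qed

section \<open>Monotonicity in the alternating lexicographic order\<close>

lemma weighted_sum_pos_or_extremal:
  fixes u c w :: "nat \<Rightarrow> real"
  assumes w: "\<And>n. 0 < w n"
    and before: "\<And>n. n < m \<Longrightarrow> u n = 0" and lead: "1 \<le> u m"
    and bound: "\<And>n. m < n \<Longrightarrow> \<bar>u n\<bar> \<le> c n"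
    and sc: "summable (\<lambda>n. c n * w n)"
    and tail: "(\<Sum>j. c (j + Suc m) * w (j + Suc m)) \<le> w m"
  shows "0 < (\<Sum>n. u n * w n) \<or> (\<forall>n>m. u n = - c n)"
proof -
  define g where "g j = (u (j + Suc m) + c (j + Suc m)) * w (j + Suc m)" for j
  have g_nonneg: "0 \<le> g j" for j
    using bound[of "j + Suc m"] w[of "j + Suc m"] by (simp add: g_def)
  have su: "summable (\<lambda>n. u n * w n)"
  proof (rule summable_comparison_test[OF _ sc])
    have "norm (u n * w n) \<le> c n * w n" if "Suc m \<le> n" for n
      using mult_right_mono[OF bound[of n] less_imp_le[OF w[of n]]] w[of n] that
      by (simp add: abs_mult)
    then show "\<exists>N. \<forall>n\<ge>N. norm (u n * w n) \<le> c n * w n" by blast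
  qed
  have sct: "summable (\<lambda>j. c (j + Suc m) * w (j + Suc m))"
    using summable_ignore_initial_segment[OF sc] .
  have sut: "summable (\<lambda>j. u (j + Suc m) * w (j + Suc m))"
    using summable_ignore_initial_segment[OF su] .
  have g_sums: "g sums ((\<Sum>j. u (j + Suc m) * w (j + Suc m)) + (\<Sum>j. c (j + Suc m) * w (j + Suc m)))"
    unfolding g_def distrib_right by (intro sums_add summable_sums sut sct)
  have "(\<Sum>i<m. u i * w i) = 0"
    using before by simp
  then have "(\<Sum>n. u n * w n) = (\<Sum>j. u (j + Suc m) * w (j + Suc m)) + u m * w m"
    using suminf_split_initial_segment[OF su, of "Suc m"] by simp
  moreover have "w m \<le> u m * w m"
    using mult_right_mono[OF lead less_imp_le[OF w]] by simp
  ultimately have sum_ge: "suminf g \<le> (\<Sum>n. u n * w n)"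
    using sums_unique[OF g_sums] tail by linarith
  show ?thesis
  proof (cases "suminf g = 0")
    case True
    then have g_zero: "g j = 0" for j
      using suminf_eq_zero_iff[OF sums_summable[OF g_sums] g_nonneg] by blast
    have "u n = - c n" if "m < n" for n
    proof -
      have "(u n + c n) * w n = 0"
        using g_zero[of "n - Suc m"] that by (simp add: g_def)
      then show ?thesis using w[of n] by simp
    qed
    then show ?thesis by blast
  next
    case False
    then show ?thesis
      using suminf_nonneg[OF sums_summable[OF g_sums] g_nonneg] sum_ge by linarith
  qed
qed

definition alt_lex_less :: "(nat \<Rightarrow> nat) \<Rightarrow> (nat \<Rightarrow> nat) \<Rightarrow> bool" where
  "alt_lex_less e1 e2 \<longleftrightarrow>
     (\<exists>m\<ge>1. (\<forall>n<m. e1 n = e2 n) \<and> (if even m then e1 m < e2 m else e2 m < e1 m))"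

lemma alt_lex_less_trichotomy:
  fixes e1 e2 :: "nat \<Rightarrow> nat"
  assumes "e1 0 = 0" and "e2 0 = 0"
  shows "e1 = e2 \<or> alt_lex_less e1 e2 \<or> alt_lex_less e2 e1"
proof (rule disjCI)
  assume "\<not> (alt_lex_less e1 e2 \<or> alt_lex_less e2 e1)"
  show "e1 = e2"
  proof (rule ccontr)
    assume "e1 \<noteq> e2"
    then obtain k where "e1 k \<noteq> e2 k" by auto
    define m where "m = (LEAST n. e1 n \<noteq> e2 n)"
    have neq: "e1 m \<noteq> e2 m"
      unfolding m_def by (rule LeastI[of _ k]) fact
    have eq: "\<forall>n<m. e1 n = e2 n" "\<forall>n<m. e2 n = e1 n"
      unfolding m_def using not_less_Least by fastforce+
    have "1 \<le> m" using neq assms by (cases m) auto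
    then have "alt_lex_less e1 e2 \<or> alt_lex_less e2 e1"
      using eq neq unfolding alt_lex_less_def by (cases "e1 m < e2 m") (auto simp: not_less_iff_gr_or_eq)
    with \<open>\<not> (alt_lex_less e1 e2 \<or> alt_lex_less e2 e1)\<close> show False ..
  qed
qed

lemma nega_val_summable:
  assumes R2: "\<forall>k\<ge>1. 2 \<le> R k" and QR: "\<forall>k\<ge>1. Q k \<le> R k" and e: "digit_seq Q e"
  shows "summable (\<lambda>n. (-1) ^ Suc n * real (e (Suc n)) / qprod R (Suc n))"
proof (rule summable_comparison_test[OF _ sums_summable[OF qprod_tail_sums[OF R2, of 0]]])
  have "\<bar>(-1) ^ Suc n * real (e (Suc n)) / qprod R (Suc n)\<bar>
      \<le> (real (R (n + Suc 0)) - 1) / qprod R (n + Suc 0)" for n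
  proof -
    have "e (Suc n) < Q (Suc n)" "Q (Suc n) \<le> R (Suc n)"
      using e QR by (auto simp: digit_seq_def)
    then have "real (e (Suc n)) \<le> real (R (Suc n)) - 1" by linarith
    then show ?thesis
      using qprod_pos[OF R2, of "Suc n"] by (simp add: abs_mult divide_right_mono)
  qed
  then show "\<exists>N. \<forall>n\<ge>N. norm ((-1) ^ Suc n * real (e (Suc n)) / qprod R (Suc n))
      \<le> (real (R (n + Suc 0)) - 1) / qprod R (n + Suc 0)" by auto
qed

lemma second_rep_if_alternating_extremal:
  assumes e: "digit_seq Q e" and e': "digit_seq Q e'" and m: "1 \<le> m" and lead: "e m < e' m"
    and ext: "\<And>j. 1 \<le> j \<Longrightarrow>
      (-1) ^ j * (real (e (m + j)) - real (e' (m + j))) = real (Q (m + j)) - 1"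
  shows "second_rep Q e"
  unfolding second_rep_def
proof (intro exI conjI allI impI)
  show "1 \<le> m" by (rule m)
  show "e m < Q m - 1" using lead e' m by (auto simp: digit_seq_def)
  fix j :: nat assume j: "1 \<le> j"
  have lt: "e (m + j) < Q (m + j)" "e' (m + j) < Q (m + j)"
    using e e' m by (auto simp: digit_seq_def)
  show "e (m + j) = (if odd j then 0 else Q (m + j) - 1)"
  proof (cases "even j")
    case True
    then have "real (e (m + j)) - real (e' (m + j)) = real (Q (m + j)) - 1" using ext[OF j] by simp
    then show ?thesis using True lt by simp
  next
    case False
    then have "real (e' (m + j)) - real (e (m + j)) = real (Q (m + j)) - 1" using ext[OF j] by simp
    then show ?thesis using False lt by simp
  qed
qed

lemma second_rep_if_extremal_tail:
  assumes e1: "digit_seq Q e1" and e2: "digit_seq Q e2" and m: "1 \<le> m"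
    and lead: "if even m then e1 m < e2 m else e2 m < e1 m"
    and ext: "\<And>n. m < n \<Longrightarrow> (-1) ^ n * (real (e2 n) - real (e1 n)) = 1 - real (Q n)"
  shows "second_rep Q e1 \<or> second_rep Q e2"
proof (cases "even m")
  case True
  have "second_rep Q e1"
  proof (rule second_rep_if_alternating_extremal[OF e1 e2 m])
    show "e1 m < e2 m" using lead True by simp
    fix j :: nat assume "1 \<le> j"
    then show "(-1) ^ j * (real (e1 (m + j)) - real (e2 (m + j))) = real (Q (m + j)) - 1"
      using ext[of "m + j"] True by (simp add: power_add algebra_simps)
  qed
  then show ?thesis ..
next
  case False
  have "second_rep Q e2"
  proof (rule second_rep_if_alternating_extremal[OF e2 e1 m])
    show "e2 m < e1 m" using lead False by simp
    fix j :: nat assume "1 \<le> j"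
    then show "(-1) ^ j * (real (e2 (m + j)) - real (e1 (m + j))) = real (Q (m + j)) - 1"
      using ext[of "m + j"] False by (simp add: power_add algebra_simps)
  qed
  then show ?thesis ..
qed

lemma nega_val_less_if_alt_lex_less:
  assumes R2: "\<forall>k\<ge>1. 2 \<le> R k" and QR: "\<forall>k\<ge>1. Q k \<le> R k"
    and a1: "admissible Q e1" and a2: "admissible Q e2" and less: "alt_lex_less e1 e2"
  shows "nega_val R e1 < nega_val R e2"
proof -
  have d1: "digit_seq Q e1" and d2: "digit_seq Q e2"
    using a1 a2 by (auto simp: admissible_def)
  obtain m where m: "1 \<le> m" and eq: "\<forall>n<m. e1 n = e2 n"
    and lead: "if even m then e1 m < e2 m else e2 m < e1 m"
    using less unfolding alt_lex_less_def by blast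
  then obtain k where k: "m = Suc k" by (cases m) auto
  define u where "u n = (-1) ^ Suc n * (real (e2 (Suc n)) - real (e1 (Suc n)))" for n
  define w where "w n = 1 / qprod R (Suc n)" for n
  define c where "c n = real (R (Suc n)) - 1" for n
  have diff: "nega_val R e2 - nega_val R e1 = (\<Sum>n. u n * w n)"
    using suminf_diff[OF nega_val_summable[OF R2 QR d2] nega_val_summable[OF R2 QR d1]]
    by (simp add: nega_val_def u_def w_def diff_divide_distrib right_diff_distrib)
  have digit_diff: "\<bar>real (e2 n) - real (e1 n)\<bar> \<le> real (Q n) - 1" if "1 \<le> n" for n
  proof -
    have "e1 n < Q n" "e2 n < Q n" using d1 d2 that by (auto simp: digit_seq_def)
    then show ?thesis by linarith
  qed
  have "0 < (\<Sum>n. u n * w n) \<or> (\<forall>n>k. u n = - c n)"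
  proof (rule weighted_sum_pos_or_extremal)
    show "0 < w n" for n using qprod_pos[OF R2] by (simp add: w_def)
    show "u n = 0" if "n < k" for n using eq that k by (simp add: u_def)
    show "1 \<le> u k" using lead k by (cases "even k") (auto simp: u_def)
    show "\<bar>u n\<bar> \<le> c n" if "k < n" for n
    proof -
      have "Q (Suc n) \<le> R (Suc n)" using QR by simp
      then show ?thesis using digit_diff[of "Suc n"] by (simp add: u_def c_def abs_mult)
    qed
    show "summable (\<lambda>n. c n * w n)"
      using sums_summable[OF qprod_tail_sums[OF R2, of 0]] by (simp add: c_def w_def)
    show "(\<Sum>j. c (j + Suc k) * w (j + Suc k)) \<le> w k"
      using sums_unique[OF qprod_tail_sums[OF R2, of "Suc k"]] by (simp add: c_def w_def)
  qed
  moreover have "\<not> (\<forall>n>k. u n = - c n)"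
  proof
    assume ext: "\<forall>n>k. u n = - c n"
    have "(-1) ^ n * (real (e2 n) - real (e1 n)) = 1 - real (Q n)" if mn: "m < n" for n
    proof -
      obtain n' where n: "n = Suc n'" "k < n'" using mn k by (cases n) auto
      have "Q n \<le> R n" using QR n by simp
      moreover have "(-1) ^ n * (real (e2 n) - real (e1 n)) = 1 - real (R n)"
        using ext n by (simp add: u_def c_def)
      moreover have "\<bar>(-1) ^ n * (real (e2 n) - real (e1 n))\<bar> \<le> real (Q n) - 1"
        using digit_diff[of n] n by (simp add: abs_mult)
      ultimately show ?thesis by linarith
    qed
    then have "second_rep Q e1 \<or> second_rep Q e2"
      using second_rep_if_extremal_tail[OF d1 d2 m lead] by blast
    then show False using a1 a2 by (auto simp: admissible_def)
  qed
  ultimately show ?thesis using diff by auto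
qed

lemma alt_lex_less_if_nega_val_less:
  assumes Q2: "\<forall>k\<ge>1. 2 \<le> Q k" and a1: "admissible Q e1" and a2: "admissible Q e2"
    and less: "nega_val Q e1 < nega_val Q e2"
  shows "alt_lex_less e1 e2"
proof -
  have "e1 0 = 0" "e2 0 = 0" using a1 a2 by (auto simp: admissible_def digit_seq_def)
  moreover have "\<not> alt_lex_less e2 e1"
    using nega_val_less_if_alt_lex_less[OF Q2 _ a2 a1] less by fastforce
  ultimately show ?thesis using alt_lex_less_trichotomy less by blast
qed

lemma nega_val_inj:
  assumes Q2: "\<forall>k\<ge>1. 2 \<le> Q k" and a1: "admissible Q e1" and a2: "admissible Q e2"
    and eq: "nega_val Q e1 = nega_val Q e2"
  shows "e1 = e2"
proof -
  have "e1 0 = 0" "e2 0 = 0" using a1 a2 by (auto simp: admissible_def digit_seq_def)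
  moreover have "\<not> alt_lex_less e1 e2" "\<not> alt_lex_less e2 e1"
    using nega_val_less_if_alt_lex_less[OF Q2 _ a1 a2] nega_val_less_if_alt_lex_less[OF Q2 _ a2 a1] eq
    by fastforce+
  ultimately show ?thesis using alt_lex_less_trichotomy by blast
qed

section \<open>Existence of representations\<close>

text \<open>The rounding depends on the parity of n so that the
  residual is positive after a nonzero even digit and below 1 after a non-maximal odd digit; this
  is what excludes the second representation.\<close>

definition cantor_digit :: "(nat \<Rightarrow> nat) \<Rightarrow> nat \<Rightarrow> real \<Rightarrow> nat" where
  "cantor_digit Q n r =
     (if even n then (if r \<le> 0 then 0 else nat (\<lceil>real (Q n) * r\<rceil> - 1))
      else (if 1 \<le> r then Q n - 1 else nat \<lfloor>real (Q n) * r\<rfloor>))"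

fun cantor_residual :: "(nat \<Rightarrow> nat) \<Rightarrow> real \<Rightarrow> nat \<Rightarrow> real" where
  "cantor_residual Q y 0 = y"
| "cantor_residual Q y (Suc n) =
     real (Q (Suc n)) * cantor_residual Q y n - real (cantor_digit Q (Suc n) (cantor_residual Q y n))"

definition cantor_digits :: "(nat \<Rightarrow> nat) \<Rightarrow> real \<Rightarrow> nat \<Rightarrow> nat" where
  "cantor_digits Q y n = (if n = 0 then 0 else cantor_digit Q n (cantor_residual Q y (n - 1)))"

lemma cantor_digit_bounds:
  assumes Q: "2 \<le> Q n" and r: "0 \<le> r" "r \<le> 1"
  shows "cantor_digit Q n r \<le> Q n - 1"
    and "0 \<le> real (Q n) * r - real (cantor_digit Q n r)"
    and "real (Q n) * r - real (cantor_digit Q n r) \<le> 1"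
proof -
  have Qr: "0 \<le> real (Q n) * r" "real (Q n) * r \<le> real (Q n)"
    using r Q by (auto simp: mult_left_le)
  have "cantor_digit Q n r \<le> Q n - 1 \<and> 0 \<le> real (Q n) * r - real (cantor_digit Q n r)
      \<and> real (Q n) * r - real (cantor_digit Q n r) \<le> 1"
  proof (cases "even n")
    case True
    have "\<lceil>real (Q n) * r\<rceil> \<le> int (Q n)" using Qr by (simp add: ceiling_le_iff)
    then show ?thesis
      using True Qr Q r unfolding cantor_digit_def
      by (auto simp: of_nat_diff)
  next
    case False
    have "r < 1 \<Longrightarrow> \<lfloor>real (Q n) * r\<rfloor> < int (Q n)" using Q by (simp add: floor_less_iff)
    moreover have "real (Q n) * r < real_of_int \<lfloor>real (Q n) * r\<rfloor> + 1" by linarith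
    ultimately show ?thesis
      using False Qr Q r unfolding cantor_digit_def
      by (auto simp: of_nat_diff) linarith+
  qed
  then show "cantor_digit Q n r \<le> Q n - 1"
    and "0 \<le> real (Q n) * r - real (cantor_digit Q n r)"
    and "real (Q n) * r - real (cantor_digit Q n r) \<le> 1" by auto
qed

lemma cantor_digit_even_residual_pos:
  assumes "even n" and "0 < cantor_digit Q n r"
  shows "0 < real (Q n) * r - real (cantor_digit Q n r)"
proof -
  have "0 < r" using assms by (auto simp: cantor_digit_def split: if_splits)
  then show ?thesis using assms by (auto simp: cantor_digit_def) linarith
qed

lemma cantor_digit_odd_residual_less_one:
  assumes "odd n" and "0 \<le> r" and "cantor_digit Q n r < Q n - 1"
  shows "real (Q n) * r - real (cantor_digit Q n r) < 1"
proof -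
  have "r < 1" using assms by (auto simp: cantor_digit_def split: if_splits)
  then show ?thesis using assms by (auto simp: cantor_digit_def) linarith
qed

lemma cantor_digits_Suc:
  "cantor_digits Q y (Suc n) = cantor_digit Q (Suc n) (cantor_residual Q y n)"
  by (simp add: cantor_digits_def)

lemma cantor_residual_bounds:
  assumes Q2: "\<forall>k\<ge>1. 2 \<le> Q k" and y: "0 \<le> y" "y \<le> 1"
  shows "0 \<le> cantor_residual Q y n \<and> cantor_residual Q y n \<le> 1"
proof (induction n)
  case (Suc n)
  have "2 \<le> Q (Suc n)" using Q2 by simp
  with Suc show ?case using cantor_digit_bounds(2,3) by simp
qed (use y in simp)

lemma cantor_digits_le:
  assumes Q2: "\<forall>k\<ge>1. 2 \<le> Q k" and y: "0 \<le> y" "y \<le> 1" and n: "1 \<le> n"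
  shows "cantor_digits Q y n \<le> Q n - 1"
proof -
  obtain k where k: "n = Suc k" using n by (cases n) auto
  have "2 \<le> Q (Suc k)" using Q2 by simp
  then show ?thesis
    using cantor_digit_bounds(1) cantor_residual_bounds[OF Q2 y, of k] by (simp add: k cantor_digits_Suc)
qed

lemma cantor_residual_step:
  assumes Q2: "\<forall>k\<ge>1. 2 \<le> Q k"
  shows "cantor_residual Q y n / qprod Q n - cantor_residual Q y (Suc n) / qprod Q (Suc n)
    = real (cantor_digits Q y (Suc n)) / qprod Q (Suc n)"
proof -
  have "2 \<le> real (Q (Suc n))" using Q2 by simp
  then show ?thesis
    using qprod_pos[OF Q2, of n] by (simp add: cantor_digits_Suc qprod_Suc field_simps)
qed

lemma cantor_tail_sums:
  assumes Q2: "\<forall>k\<ge>1. 2 \<le> Q k" and y: "0 \<le> y" "y \<le> 1"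
  shows "(\<lambda>j. real (cantor_digits Q y (j + Suc m)) / qprod Q (j + Suc m))
    sums (cantor_residual Q y m / qprod Q m)"
proof -
  let ?f = "\<lambda>j. cantor_residual Q y (j + m) / qprod Q (j + m)"
  have "?f \<longlonglongrightarrow> 0"
  proof (rule tendsto_sandwich[of "\<lambda>_. 0" _ _ "\<lambda>j. 1 / qprod Q (j + m)"])
    show "\<forall>\<^sub>F j in sequentially. 0 \<le> ?f j"
      using cantor_residual_bounds[OF Q2 y] qprod_pos[OF Q2]
      by (auto intro!: always_eventually divide_nonneg_pos)
    have "?f j \<le> 1 / qprod Q (j + m)" for j
      using cantor_residual_bounds[OF Q2 y, of "j + m"] qprod_pos[OF Q2, of "j + m"]
      by (simp add: divide_right_mono)
    then show "\<forall>\<^sub>F j in sequentially. ?f j \<le> 1 / qprod Q (j + m)"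
      by (simp add: always_eventually)
    show "(\<lambda>j. 1 / qprod Q (j + m)) \<longlonglongrightarrow> 0"
      by (rule LIMSEQ_ignore_initial_segment[OF inverse_qprod_LIMSEQ[OF Q2]])
  qed simp
  from telescope_sums'[OF this] show ?thesis
    using cantor_residual_step[OF Q2] by simp
qed

lemma cantor_residual_eq_0_if_tail_zero:
  assumes Q2: "\<forall>k\<ge>1. 2 \<le> Q k" and y: "0 \<le> y" "y \<le> 1"
    and tail: "\<And>j. 1 \<le> j \<Longrightarrow> cantor_digits Q y (m + j) = 0"
  shows "cantor_residual Q y m = 0"
proof -
  have "(\<lambda>j. real (cantor_digits Q y (j + Suc m)) / qprod Q (j + Suc m)) = (\<lambda>_. 0)"
    using tail[of "Suc _"] by (simp add: add.commute)
  then have "cantor_residual Q y m / qprod Q m = 0"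
    using cantor_tail_sums[OF Q2 y, of m] sums_unique sums_zero by metis
  then show ?thesis using qprod_pos[OF Q2, of m] by simp
qed

lemma cantor_residual_eq_1_if_tail_max:
  assumes Q2: "\<forall>k\<ge>1. 2 \<le> Q k" and y: "0 \<le> y" "y \<le> 1"
    and tail: "\<And>j. 1 \<le> j \<Longrightarrow> cantor_digits Q y (m + j) = Q (m + j) - 1"
  shows "cantor_residual Q y m = 1"
proof -
  have "real (cantor_digits Q y (j + Suc m)) = real (Q (j + Suc m)) - 1" for j
  proof -
    have "2 \<le> Q (j + Suc m)" using Q2 by simp
    then show ?thesis using tail[of "Suc j"] by (simp add: add.commute of_nat_diff)
  qed
  then have "(\<lambda>j. (real (Q (j + Suc m)) - 1) / qprod Q (j + Suc m))
      sums (cantor_residual Q y m / qprod Q m)"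
    using cantor_tail_sums[OF Q2 y, of m] by simp
  then have "cantor_residual Q y m / qprod Q m = 1 / qprod Q m"
    using qprod_tail_sums[OF Q2, of m] by (rule sums_unique2)
  then show ?thesis using qprod_pos[OF Q2, of m] by simp
qed

lemma cantor_residual_pos_if_even_digit_pos:
  assumes Q2: "\<forall>k\<ge>1. 2 \<le> Q k" and "even m" and "0 < cantor_digits Q y m"
  shows "0 < cantor_residual Q y m"
proof -
  obtain k where k: "m = Suc k" using assms by (cases m) (auto simp: cantor_digits_def)
  show ?thesis
    using cantor_digit_even_residual_pos[of "Suc k" Q] assms by (simp add: k cantor_digits_Suc)
qed

lemma cantor_residual_less_one_if_odd_digit_less:
  assumes Q2: "\<forall>k\<ge>1. 2 \<le> Q k" and y: "0 \<le> y" "y \<le> 1"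
    and "odd m" and "cantor_digits Q y m < Q m - 1"
  shows "cantor_residual Q y m < 1"
proof -
  obtain k where k: "m = Suc k" using assms by (cases m) auto
  show ?thesis
    using cantor_digit_odd_residual_less_one[of "Suc k" "cantor_residual Q y k" Q]
      cantor_residual_bounds[OF Q2 y, of k] assms
    by (simp add: k cantor_digits_Suc)
qed

lemma a0_sums:
  assumes Q2: "\<forall>k\<ge>1. 2 \<le> Q k"
  shows "(\<lambda>n. (if odd n then real (Q (Suc n)) - 1 else 0) / qprod Q (Suc n)) sums a0 Q"
proof -
  let ?f = "\<lambda>n. (if odd n then real (Q (Suc n)) - 1 else 0) / qprod Q (Suc n)"
  have "summable ?f"
  proof (rule summable_comparison_test[OF _ sums_summable[OF qprod_tail_sums[OF Q2, of 0]]])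
    have "\<bar>?f n\<bar> \<le> (real (Q (n + Suc 0)) - 1) / qprod Q (n + Suc 0)" for n
    proof -
      have "2 \<le> real (Q (Suc n))" using Q2 by simp
      then show ?thesis using qprod_pos[OF Q2, of "Suc n"] by auto
    qed
    then show "\<exists>N. \<forall>n\<ge>N. norm (?f n) \<le> (real (Q (n + Suc 0)) - 1) / qprod Q (n + Suc 0)"
      by auto
  qed
  then have f_sums: "?f sums suminf ?f" by (rule summable_sums)
  have "(\<lambda>k. ?f (Suc (2 * k))) sums suminf ?f"
  proof (rule sums_mono_reindex[THEN iffD2, OF _ _ f_sums])
    show "strict_mono (\<lambda>k::nat. Suc (2 * k))" by (rule strict_monoI) simp
    show "?f n = 0" if "n \<notin> range (\<lambda>k. Suc (2 * k))" for n
      using that oddE[of n] by auto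
  qed
  then have "(\<lambda>k. (real (Q (2 * Suc k)) - 1) / qprod Q (2 * Suc k)) sums suminf ?f"
    by simp
  then have "a0 Q = suminf ?f" unfolding a0_def by (simp add: sums_iff)
  with f_sums show ?thesis by simp
qed

text \<open>Complementing the even-position digits turns the Cantor expansion of y into a nega-Q
  expansion of a0 Q - y.\<close>

definition nega_digits :: "(nat \<Rightarrow> nat) \<Rightarrow> real \<Rightarrow> nat \<Rightarrow> nat" where
  "nega_digits Q y n =
     (if even n \<and> n \<noteq> 0 then Q n - 1 - cantor_digits Q y n else cantor_digits Q y n)"

lemma nega_digits_digit_seq:
  assumes Q2: "\<forall>k\<ge>1. 2 \<le> Q k" and y: "0 \<le> y" "y \<le> 1"
  shows "digit_seq Q (nega_digits Q y)"
  unfolding digit_seq_def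
proof (intro conjI allI impI)
  show "nega_digits Q y 0 = 0" by (simp add: nega_digits_def cantor_digits_def)
  fix k :: nat assume k: "1 \<le> k"
  then show "nega_digits Q y k < Q k"
    using cantor_digits_le[OF Q2 y k] Q2 by (auto simp: nega_digits_def)
qed

lemma nega_val_nega_digits:
  assumes Q2: "\<forall>k\<ge>1. 2 \<le> Q k" and y: "0 \<le> y" "y \<le> 1"
  shows "nega_val Q (nega_digits Q y) = a0 Q - y"
proof -
  have "(-1) ^ Suc n * real (nega_digits Q y (Suc n)) / qprod Q (Suc n)
      = (if odd n then real (Q (Suc n)) - 1 else 0) / qprod Q (Suc n)
        - real (cantor_digits Q y (Suc n)) / qprod Q (Suc n)" for n
  proof -
    have "cantor_digits Q y (Suc n) \<le> Q (Suc n) - 1" "2 \<le> Q (Suc n)"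
      using cantor_digits_le[OF Q2 y] Q2 by auto
    then show ?thesis
      by (simp add: nega_digits_def of_nat_diff diff_divide_distrib add_divide_distrib)
  qed
  moreover have "(\<lambda>n. real (cantor_digits Q y (Suc n)) / qprod Q (Suc n)) sums y"
    using cantor_tail_sums[OF Q2 y, of 0] by simp
  ultimately have "(\<lambda>n. (-1) ^ Suc n * real (nega_digits Q y (Suc n)) / qprod Q (Suc n))
      sums (a0 Q - y)"
    using sums_diff[OF a0_sums[OF Q2]] by simp
  then show ?thesis unfolding nega_val_def by (simp add: sums_iff)
qed

lemma nega_digits_not_second_rep:
  assumes Q2: "\<forall>k\<ge>1. 2 \<le> Q k" and y: "0 \<le> y" "y \<le> 1"
  shows "\<not> second_rep Q (nega_digits Q y)"
proof
  assume "second_rep Q (nega_digits Q y)"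
  then obtain m where m: "1 \<le> m" and lead: "nega_digits Q y m < Q m - 1"
    and tail: "\<And>j. 1 \<le> j \<Longrightarrow> nega_digits Q y (m + j) = (if odd j then 0 else Q (m + j) - 1)"
    unfolding second_rep_def by blast
  have le: "cantor_digits Q y (m + j) \<le> Q (m + j) - 1" "2 \<le> Q (m + j)" for j
    using cantor_digits_le[OF Q2 y, of "m + j"] Q2 m by auto
  show False
  proof (cases "even m")
    case True
    have "0 < cantor_residual Q y m"
      using cantor_residual_pos_if_even_digit_pos[OF Q2 True, of y] lead m True
      by (simp add: nega_digits_def)
    moreover have "cantor_digits Q y (m + j) = 0" if "1 \<le> j" for j
      using tail[OF that] le[of j] True m by (auto simp: nega_digits_def split: if_splits)
    ultimately show False using cantor_residual_eq_0_if_tail_zero[OF Q2 y] by simp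
  next
    case False
    have "cantor_residual Q y m < 1"
      using cantor_residual_less_one_if_odd_digit_less[OF Q2 y False] lead False
      by (simp add: nega_digits_def)
    moreover have "cantor_digits Q y (m + j) = Q (m + j) - 1" if "1 \<le> j" for j
      using tail[OF that] le[of j] False m by (auto simp: nega_digits_def split: if_splits)
    ultimately show False using cantor_residual_eq_1_if_tail_max[OF Q2 y] by simp
  qed
qed

lemma nega_rep_correct:
  assumes Q2: "\<forall>k\<ge>1. 2 \<le> Q k" and x: "x \<in> {a0 Q - 1 .. a0 Q}"
  shows "admissible Q (nega_rep Q x)" and "nega_val Q (nega_rep Q x) = x"
proof -
  have y: "0 \<le> a0 Q - x" "a0 Q - x \<le> 1" using x by auto
  have "\<exists>!e. admissible Q e \<and> nega_val Q e = x"
  proof (rule ex_ex1I)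
    show "\<exists>e. admissible Q e \<and> nega_val Q e = x"
      using nega_digits_digit_seq[OF Q2 y] nega_digits_not_second_rep[OF Q2 y]
        nega_val_nega_digits[OF Q2 y]
      by (intro exI[of _ "nega_digits Q (a0 Q - x)"]) (simp add: admissible_def)
  qed (use nega_val_inj[OF Q2] in blast)
  then have "admissible Q (nega_rep Q x) \<and> nega_val Q (nega_rep Q x) = x"
    unfolding nega_rep_def by (rule theI')
  then show "admissible Q (nega_rep Q x)" and "nega_val Q (nega_rep Q x) = x" by auto
qed

lemma fmap_eq_nega_val: "fmap Q q x = nega_val (\<lambda>_. q) (nega_rep Q x)"
proof -
  have sign: "a / (- real q) ^ k = (-1) ^ k * a / real q ^ k" for a :: real and k
    by (cases "even k") simp_all
  show ?thesis by (simp only: fmap_def nega_val_def qprod_const sign)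
qed

theorem mainTheorem3:
  fixes Q :: "nat \<Rightarrow> nat" and q :: nat and x1 x2 :: real
  assumes "\<forall>k\<ge>1. 2 \<le> Q k"
    and "2 \<le> q"
    and "\<forall>k\<ge>1. Q k \<le> q"
    and "x1 \<in> {a0 Q - 1 .. a0 Q}"
    and "x2 \<in> {a0 Q - 1 .. a0 Q}"
    and "x1 < x2"
  shows "fmap Q q x1 < fmap Q q x2"
proof -
  note rep1 = nega_rep_correct[OF assms(1,4)] and rep2 = nega_rep_correct[OF assms(1,5)]
  have "alt_lex_less (nega_rep Q x1) (nega_rep Q x2)"
    using alt_lex_less_if_nega_val_less[OF assms(1) rep1(1) rep2(1)] rep1(2) rep2(2) assms(6) by simp
  then have "nega_val (\<lambda>_. q) (nega_rep Q x1) < nega_val (\<lambda>_. q) (nega_rep Q x2)"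
    using nega_val_less_if_alt_lex_less[OF _ _ rep1(1) rep2(1)] assms(2,3) by simp
  then show ?thesis by (simp add: fmap_eq_nega_val)
qed

end
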